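(* Let $m\geq 1$. For a $(2m+1)$-historic tree $H$ on $N$ vertices let $w(H)$ be the number of permutations $\pi\in S_N$ which, used as key sequence, produce the history $\Phi^{-1}(H)$, and let $\mathsf e(H)$ be its number of external vertices. Let \[ W(x,u)=\sum_{n\geq0}\ \sum_{H\text{ on } n+m\text{ vertices}} w(H)\,u^{\mathsf e(H)}\frac{x^n}{n!}. \] Then, as formal power series in $x$ with coefficients polynomials in $u$, \[ \frac{\partial^{m+1}}{\partial x^{m+1}}W(x,u)=\frac{(2m+1)!}{(m!)^2}W(x,u)^2,\qquad \frac{\partial^{i}}{\partial x^{i}}W(0,u)=(m+i)!\,u\quad(i=0,1,\dots,m), \] and $W(x,1)=m!\,(1-x)^{-m-1}$.
   Context: A $B$-tree of order $2m+1$ is a rooted plane search tree whose nodes contain pairwise distinct keys in increasing left-to-right order, every non-root node has between $m$ and $2m$ keys, the root between $1$ and $2m$, all leaves have equal depth. Insertion: place the new key in the appropriate leaf; whenever a node has $2m+1$ keys, split it, moving the median key up into the parent and forming two nodes from the $m$ smallest and $m$ largest keys (new one-key root if the root splits). A permutation $\pi\in S_N$ used as key sequence means inserting $\pi(1),\dots,\pi(N)$ successively into the empty tree; it produces the history $(T_1,\dots,T_N)$, $T_i$ being the tree (up to isomorphism of rooted plane trees) after $i$ insertions; leaves are numbered left to right. A $(2m+1)$-historic tree on $N$ vertices is a rooted plane tree with vertices labelled bijectively by $\{1,\dots,N\}$, labels increasing along every root-to-leaf path, where (root at height $0$) vertices at heights $2m+j(m+1)$, $j\geq 0$, called branchings,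 have two ordered child slots (left, right), each possibly occupied, and all other vertices have a single child slot; unoccupied slots are external vertices, ordered left to right. $\Phi$ is the bijection from histories to historic trees: $\Phi(T_1)$ is the one-vertex tree; if $T_{k+1}$ arises from $T_k$ by inserting into the $i$-th leaf of $T_k$ (before splits), then $\Phi(T_1,\dots,T_{k+1})$ is $\Phi(T_1,\dots,T_k)$ with a vertex labelled $k+1$ placed at its $i$-th external vertex. *)

theory Defs
  imports "HOL-Computational_Algebra.Computational_Algebra" "HOL-Combinatorics.Multiset_Permutations"
begin

text \<open>A B-tree node: a leaf with its (sorted) key list, or an inner node with
 key list ks and child list cs (length cs = length ks + 1).  The empty tree is
 represented by the leaf with no keys.\<close>
datatype btree = BLeaf "nat list" | BNode "nat list" "btree list"

datatype ins_result = Fit btree | Up btree nat btree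

lemma size_nth_less: "j < length cs \<Longrightarrow> size (cs ! j) < Suc (size_list size cs)"
  by (metis le_imp_less_Suc nth_mem size_list_estimation' order_refl)

function bins :: "nat \<Rightarrow> nat \<Rightarrow> btree \<Rightarrow> ins_result" where
  "bins m x (BLeaf ks) =
     (let ks' = insort x ks in
      if length ks' \<le> 2*m then Fit (BLeaf ks')
      else Up (BLeaf (take m ks')) (ks' ! m) (BLeaf (drop (m+1) ks')))"
| "bins m x (BNode ks cs) =
     (let j = length (filter (\<lambda>k. k < x) ks) in
      if j < length cs then
        (case bins m x (cs ! j) of
           Fit c \<Rightarrow> Fit (BNode ks (cs[j := c]))
         | Up l k r \<Rightarrow>
             (let ks' = take j ks @ k # drop j ks;
                  cs' = take j cs @ l # r # drop (Suc j) cs in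
              if length ks' \<le> 2*m then Fit (BNode ks' cs')
              else Up (BNode (take m ks') (take (m+1) cs')) (ks' ! m)
                      (BNode (drop (m+1) ks') (drop (m+1) cs'))))
      else Fit (BNode ks cs))"
  by pat_completeness auto
termination
  by (relation "measure (\<lambda>(m, x, t). size t)") (auto simp: size_nth_less)

definition binsert :: "nat \<Rightarrow> nat \<Rightarrow> btree \<Rightarrow> btree" where
  "binsert m x t = (case bins m x t of Fit t' \<Rightarrow> t' | Up l k r \<Rightarrow> BNode [k] [l, r])"

fun nleaves :: "btree \<Rightarrow> nat" where
  "nleaves (BLeaf ks) = 1"
| "nleaves (BNode ks cs) = sum_list (map nleaves cs)"

function leaf_idx :: "nat \<Rightarrow> btree \<Rightarrow> nat" where
  "leaf_idx x (BLeaf ks) = 0"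
| "leaf_idx x (BNode ks cs) =
     (let j = length (filter (\<lambda>k. k < x) ks) in
      if j < length cs then sum_list (map nleaves (take j cs)) + leaf_idx x (cs ! j) else 0)"
  by pat_completeness auto
termination
  by (relation "measure (\<lambda>(x, t). size t)") (auto simp: size_nth_less)

text \<open>A vertex carries its label and its ordered list of child slots; a slot is
 either external (unoccupied) or holds a subtree.\<close>
datatype htree = HNode nat "hslot list" and hslot = Ext | Sub htree

text \<open>Number of child slots of a vertex at height h: 2 for branchings
 (heights 2m + j(m+1)), 1 otherwise.\<close>
definition nslots :: "nat \<Rightarrow> nat \<Rightarrow> nat" where
  "nslots m h = (if 2*m \<le> h \<and> (h - 2*m) mod (m+1) = 0 then 2 else 1)"

fun ext_tree :: "htree \<Rightarrow> nat" and ext_slots :: "hslot list \<Rightarrow> nat" where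
  "ext_tree (HNode a ss) = ext_slots ss"
| "ext_slots [] = 0"
| "ext_slots (Ext # ss) = Suc (ext_slots ss)"
| "ext_slots (Sub t # ss) = ext_tree t + ext_slots ss"

text \<open>hins m h l i t: put a new vertex labelled l at the i-th (0-based)
 external vertex of t, whose root is at height h.  ins_slots works on a
 slot list whose slots are at height h.\<close>
fun hins :: "nat \<Rightarrow> nat \<Rightarrow> nat \<Rightarrow> nat \<Rightarrow> htree \<Rightarrow> htree"
and ins_slots :: "nat \<Rightarrow> nat \<Rightarrow> nat \<Rightarrow> nat \<Rightarrow> hslot list \<Rightarrow> hslot list" where
  "hins m h l i (HNode a ss) = HNode a (ins_slots m (Suc h) l i ss)"
| "ins_slots m h l i [] = []"
| "ins_slots m h l i (Ext # ss) =
     (if i = 0 then Sub (HNode l (replicate (nslots m h) Ext)) # ss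
      else Ext # ins_slots m h l (i - 1) ss)"
| "ins_slots m h l i (Sub t # ss) =
     (if i < ext_tree t then Sub (hins m h l i t) # ss
      else Sub t # ins_slots m h l (i - ext_tree t) ss)"

text \<open>State: current B-tree, current historic tree, number of keys inserted.\<close>
definition phi_step :: "nat \<Rightarrow> btree \<times> htree \<times> nat \<Rightarrow> nat \<Rightarrow> btree \<times> htree \<times> nat" where
  "phi_step m st x = (case st of (bt, H, k) \<Rightarrow>
      (binsert m x bt, hins m 0 (Suc k) (leaf_idx x bt) H, Suc k))"

text \<open>Phi applied to the history produced by the key sequence xs.\<close>
fun phi :: "nat \<Rightarrow> nat list \<Rightarrow> htree" where
  "phi m [] = HNode 0 []"
| "phi m (x # xs) =
     fst (snd (foldl (phi_step m)
        (binsert m x (BLeaf []), HNode 1 (replicate (nslots m 0) Ext), 1) xs))"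

definition hw :: "nat \<Rightarrow> nat \<Rightarrow> htree \<Rightarrow> nat" where
  "hw m N H = card {ps \<in> permutations_of_set {1..N}. phi m ps = H}"

definition Wgf :: "nat \<Rightarrow> rat poly fps" where
  "Wgf m = Abs_fps (\<lambda>n.
     smult (1 / of_nat (fact n))
       (\<Sum>H \<in> phi m ` permutations_of_set {1..n+m}.
          of_nat (hw m (n+m) H) * monom 1 (ext_tree H)))"

end

theory Submission
  imports Defs
begin

text \<open>A B-tree is abstracted to its frame: the key lists of its leaves and its inner keys.
  Insertion acts on the frame locally: the new key enters the leaf between the inner keys around
  it, and a leaf reaching \<open>2m+1\<close> keys splits at its median. External vertices of the historic
  tree correspond to leaves, an external vertex at height \<open>h\<close> to a leaf with
  \<open>leaf_load m h\<close> keys. Hence \<open>e(H)\<close> is the number of leaves, and the coefficient of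
  \<open>x\<^sup>n/n!\<close> in \<open>W\<close> is \<open>L(n+m)\<close>, the sum of \<open>u\<^sup>#leaves\<close> over all insertion
  orders of \<open>{1..n+m}\<close>.

  For \<open>N \<le> 2m\<close> there is a single leaf, so \<open>L(N) = N! u\<close>; at \<open>u = 1\<close> every
  \<open>L(N)\<close> is \<open>N!\<close>. For larger \<open>N\<close> the first \<open>2m+1\<close> keys fill the root leaf and split
  it at their median \<open>k\<close> into two leaves of \<open>m\<close> keys. Afterwards the keys below and above
  \<open>k\<close> evolve independently, and the remaining insertion order is a shuffle of an order of the
  smaller and an order of the larger keys. The \<open>m\<close> keys already in each half, in any of
  their \<open>m!\<close> orders, followed by the rest of that half form an arbitrary insertion order of
  the half, so
  \<open>m!\<^sup>2 L(n+2m+1) = (2m+1)! \<Sum>\<^sub>i C(n,i) L(i+m) L(n-i+m)\<close>,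
  the coefficientwise form of the differential equation.\<close>

section \<open>B-trees and their frames\<close>

fun weave :: "('b \<Rightarrow> 'a list) \<Rightarrow> 'a list \<Rightarrow> 'b list \<Rightarrow> 'a list" where
  "weave f ks [] = []"
| "weave f [] (c # cs) = f c"
| "weave f (k # ks) (c # cs) = f c @ k # weave f ks cs"

lemma weave_cong [fundef_cong]:
  "ks = ks' \<Longrightarrow> cs = cs' \<Longrightarrow> (\<And>c. c \<in> set cs \<Longrightarrow> f c = g c) \<Longrightarrow> weave f ks cs = weave g ks' cs'"
  by (induction f ks cs arbitrary: ks' cs' rule: weave.induct) auto

fun leaves :: "btree \<Rightarrow> nat list list" where
  "leaves (BLeaf ks) = [ks]"
| "leaves (BNode ks cs) = concat (map leaves cs)"

fun separators :: "btree \<Rightarrow> nat list" where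
  "separators (BLeaf ks) = []"
| "separators (BNode ks cs) = weave separators ks cs"

fun inorder :: "btree \<Rightarrow> nat list" where
  "inorder (BLeaf ks) = ks"
| "inorder (BNode ks cs) = weave inorder ks cs"

fun wf_btree :: "btree \<Rightarrow> bool" where
  "wf_btree (BLeaf ks) = True"
| "wf_btree (BNode ks cs) = (length cs = Suc (length ks) \<and> (\<forall>c\<in>set cs. wf_btree c))"

lemma nleaves_eq_length_leaves: "nleaves t = length (leaves t)"
  by (induction t) (auto simp: length_concat comp_def intro!: arg_cong[where f=sum_list] map_cong)

lemma weave_append:
  "length ks = length cs \<Longrightarrow> weave f (ks @ ks') (cs @ cs') = weave f ks cs @ weave f ks' cs'"
  by (induction ks cs rule: list_induct2) auto

lemma length_weave:
  "length ks = length cs \<Longrightarrow> length (weave f ks cs) = sum_list (map (length \<circ> f) cs) + length ks"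
  by (induction ks cs rule: list_induct2) auto

lemma set_weave_mono:
  "(\<And>c. c \<in> set cs \<Longrightarrow> set (f c) \<subseteq> set (g c)) \<Longrightarrow> set (weave f ks cs) \<subseteq> set (weave g ks cs)"
  by (induction f ks cs rule: weave.induct) auto

lemma set_keys_subset_weave: "length cs = Suc (length ks) \<Longrightarrow> set ks \<subseteq> set (weave f ks cs)"
  by (induction f ks cs rule: weave.induct) auto

definition weave_from :: "('b \<Rightarrow> 'a list) \<Rightarrow> nat \<Rightarrow> 'a list \<Rightarrow> 'b list \<Rightarrow> 'a list" where
  "weave_from f j ks cs =
     (if j < length ks then ks ! j # weave f (drop (Suc j) ks) (drop (Suc j) cs) else [])"

lemma weave_drop_Cons:
  assumes "length cs = Suc (length ks)" "j < length cs"
  shows "weave f (drop j ks) (c # drop (Suc j) cs) = f c @ weave_from f j ks cs"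
proof (cases "j < length ks")
  case True
  then have "drop j ks = ks ! j # drop (Suc j) ks" by (simp add: Cons_nth_drop_Suc)
  then show ?thesis using True by (simp add: weave_from_def)
next
  case False
  then have "drop j ks = []" "drop (Suc j) cs = []" using assms by auto
  then show ?thesis using False by (simp add: weave_from_def)
qed

lemma weave_at:
  assumes "length cs = Suc (length ks)" "j < length cs"
  shows "weave f ks cs = weave f (take j ks) (take j cs) @ f (cs ! j) @ weave_from f j ks cs"
proof -
  have "weave f ks cs = weave f (take j ks @ drop j ks) (take j cs @ cs ! j # drop (Suc j) cs)"
    using assms by (simp add: id_take_nth_drop[symmetric])
  also have "\<dots> = weave f (take j ks) (take j cs) @ weave f (drop j ks) (cs ! j # drop (Suc j) cs)"
    using assms by (intro weave_append) auto
  finally show ?thesis using weave_drop_Cons[OF assms] by simp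
qed

lemma weave_at_key:
  assumes "length cs = Suc (length ks)" "n < length ks"
  shows "weave f ks cs = weave f (take n ks) (take (Suc n) cs)
                        @ ks ! n # weave f (drop (Suc n) ks) (drop (Suc n) cs)"
proof -
  have "weave f (take n ks @ []) (take n cs @ [cs ! n])
        = weave f (take n ks) (take n cs) @ weave f [] [cs ! n]"
    using assms by (intro weave_append) auto
  then have "weave f (take n ks) (take (Suc n) cs) = weave f (take n ks) (take n cs) @ f (cs ! n)"
    using assms by (simp add: take_Suc_conv_app_nth)
  then show ?thesis using weave_at[of cs ks n f] assms by (simp add: weave_from_def)
qed

lemma weave_insert_at:
  assumes "length cs = Suc (length ks)" "j < length cs"
  shows "weave f (take j ks @ k # drop j ks) (take j cs @ l # r # drop (Suc j) cs)
       = weave f (take j ks) (take j cs) @ f l @ k # f r @ weave_from f j ks cs"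
proof -
  have "weave f (take j ks @ k # drop j ks) (take j cs @ l # r # drop (Suc j) cs)
     = weave f (take j ks) (take j cs) @ weave f (k # drop j ks) (l # r # drop (Suc j) cs)"
    using assms by (intro weave_append) auto
  then show ?thesis using weave_drop_Cons[OF assms] by simp
qed

lemma set_separators_subset_inorder: "set (separators t) \<subseteq> set (inorder t)"
  by (induction t) (auto intro: set_weave_mono[THEN subsetD])

lemma length_leaves: "wf_btree t \<Longrightarrow> length (leaves t) = Suc (length (separators t))"
proof (induction t)
  case (BLeaf ks)
  then show ?case by simp
next
  case (BNode ks cs)
  then obtain c cs0 where cs: "cs = cs0 @ [c]" and l: "length cs0 = length ks"
    by (metis length_Suc_conv_rev wf_btree.simps(2))
  have "length (concat (map leaves cs')) = sum_list (map (length \<circ> separators) cs') + length cs'"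
    if "\<forall>c\<in>set cs'. length (leaves c) = Suc (length (separators c))" for cs'
    using that by (induction cs') auto
  then have "length (leaves (BNode ks cs)) = sum_list (map (length \<circ> separators) cs) + length cs"
    using BNode by simp
  moreover have "separators (BNode ks cs) = weave separators ks cs0 @ separators c"
    using weave_append[of ks cs0 separators "[]" "[c]"] l cs by simp
  ultimately show ?case using length_weave[of ks cs0 separators] l cs by simp
qed

lemma length_concat_leaves:
  "\<forall>c\<in>set cs. wf_btree c
   \<Longrightarrow> length (concat (map leaves cs)) = sum_list (map (length \<circ> separators) cs) + length cs"
  by (induction cs) (auto simp: length_leaves)

lemma sorted_weave_below_above:
  assumes "sorted (weave f ks cs)" "length cs = Suc (length ks)"
    and "j = length (filter (\<lambda>k. k < x) ks)"
  shows "(\<forall>y\<in>set (weave f (take j ks) (take j cs)). y < x) \<and> (\<forall>y\<in>set (weave_from f j ks cs). x \<le> y)"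
  using assms
proof (induction ks arbitrary: cs j)
  case Nil
  then show ?case by (simp add: weave_from_def)
next
  case (Cons k ks)
  obtain c cs' where cs: "cs = c # cs'" and len: "length cs' = Suc (length ks)"
    using Cons.prems by (cases cs) auto
  have "sorted (f c @ k # weave f ks cs')" using Cons.prems cs by simp
  then have sorted': "sorted (weave f ks cs')" and fc: "\<forall>y\<in>set (f c). y \<le> k"
    and kw: "\<forall>y\<in>set (weave f ks cs'). k \<le> y"
    by (auto simp: sorted_append)
  show ?case
  proof (cases "k < x")
    case True
    define j' where "j' = length (filter (\<lambda>k. k < x) ks)"
    have "j = Suc j'" using True Cons.prems(3) by (simp add: j'_def)
    moreover have "\<forall>y\<in>set (weave f (take j' ks) (take j' cs')). y < x"
      and "\<forall>y\<in>set (weave_from f j' ks cs'). x \<le> y"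
      using Cons.IH[OF sorted' len j'_def] by auto
    ultimately show ?thesis using cs fc True by (auto simp: weave_from_def)
  next
    case False
    then have "j = 0" using Cons.prems(3) kw set_keys_subset_weave[OF len]
      by (fastforce simp: filter_empty_conv)
    then show ?thesis using cs False kw by (auto simp: weave_from_def)
  qed
qed

lemma insort_append_left: "\<forall>p\<in>set P. p < (x::nat) \<Longrightarrow> insort x (P @ M) = P @ insort x M"
  by (induction P) auto

lemma insort_append_right: "\<forall>t\<in>set T. (x::nat) \<le> t \<Longrightarrow> insort x (M @ T) = insort x M @ T"
  by (induction M) (cases T, auto)

type_synonym frame = "nat list list \<times> nat list"

definition btree_frame :: "btree \<Rightarrow> frame" where
  "btree_frame t = (leaves t, separators t)"

definition frame_insert :: "nat \<Rightarrow> nat \<Rightarrow> frame \<Rightarrow> frame" where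
  "frame_insert m x fr = (case fr of (ls, ss) \<Rightarrow>
     let i = length (filter (\<lambda>s. s < x) ss); l = insort x (ls ! i) in
     if length l \<le> 2*m then (ls[i := l], ss)
     else (take i ls @ take m l # drop (Suc m) l # drop (Suc i) ls, take i ss @ l ! m # drop i ss))"

lemma frame_insert_append:
  assumes "length LA = length P" "\<forall>p\<in>set P. p < x" "\<forall>t\<in>set T. x \<le> t"
    "length (filter (\<lambda>s. s < x) S) < length L"
  shows "frame_insert m x (LA @ L @ LB, P @ S @ T)
       = (LA @ fst (frame_insert m x (L, S)) @ LB, P @ snd (frame_insert m x (L, S)) @ T)"
proof -
  have "filter (\<lambda>s. s < x) P = P" "filter (\<lambda>s. s < x) T = []"
    using assms(2,3) by (auto simp: filter_id_conv filter_empty_conv)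
  moreover define i where "i = length (filter (\<lambda>s. s < x) S)"
  moreover have "i < length L" "i \<le> length S" using assms(4) by (auto simp: i_def)
  ultimately show ?thesis
    using assms(1) unfolding frame_insert_def
    by (simp add: Let_def i_def[symmetric] nth_append list_update_append)
qed

lemma set_weave_from_mono:
  "(\<And>c. c \<in> set cs \<Longrightarrow> set (f c) \<subseteq> set (g c))
   \<Longrightarrow> set (weave_from f j ks cs) \<subseteq> set (weave_from g j ks cs)"
  unfolding weave_from_def using set_weave_mono[of "drop (Suc j) cs" f g "drop (Suc j) ks"]
  by (auto dest: in_set_dropD)

lemma node_decomp_at_key:
  assumes wf: "wf_btree (BNode ks cs)" and sorted: "sorted (inorder (BNode ks cs))"
    and j: "j = length (filter (\<lambda>k. k < x) ks)"
  shows "j < length cs" "wf_btree (cs ! j)" "sorted (inorder (cs ! j))"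
    and "inorder (BNode ks cs)
           = weave inorder (take j ks) (take j cs) @ inorder (cs ! j) @ weave_from inorder j ks cs"
    and "separators (BNode ks cs)
           = weave separators (take j ks) (take j cs) @ separators (cs ! j) @ weave_from separators j ks cs"
    and "leaves (BNode ks cs)
           = concat (map leaves (take j cs)) @ leaves (cs ! j) @ concat (map leaves (drop (Suc j) cs))"
    and "\<forall>y\<in>set (weave inorder (take j ks) (take j cs)). y < x"
    and "\<forall>y\<in>set (weave_from inorder j ks cs). x \<le> y"
    and "\<forall>y\<in>set (weave separators (take j ks) (take j cs)). y < x"
    and "\<forall>y\<in>set (weave_from separators j ks cs). x \<le> y"
    and "length (concat (map leaves (take j cs))) = length (weave separators (take j ks) (take j cs))"
proof -
  have len: "length cs = Suc (length ks)" and wfc: "\<forall>c\<in>set cs. wf_btree c" using wf by auto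
  show jl: "j < length cs" using len j by (simp add: less_Suc_eq_le)
  show "wf_btree (cs ! j)" using wfc jl by simp
  show ino: "inorder (BNode ks cs)
           = weave inorder (take j ks) (take j cs) @ inorder (cs ! j) @ weave_from inorder j ks cs"
    using weave_at[OF len jl] by simp
  then show "sorted (inorder (cs ! j))" using sorted sorted_append by metis
  show "separators (BNode ks cs)
           = weave separators (take j ks) (take j cs) @ separators (cs ! j) @ weave_from separators j ks cs"
    using weave_at[OF len jl] by simp
  show "leaves (BNode ks cs)
           = concat (map leaves (take j cs)) @ leaves (cs ! j) @ concat (map leaves (drop (Suc j) cs))"
    using arg_cong[OF id_take_nth_drop[OF jl], of "\<lambda>l. concat (map leaves l)"] by simp
  have below: "\<forall>y\<in>set (weave inorder (take j ks) (take j cs)). y < x"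
    and above: "\<forall>y\<in>set (weave_from inorder j ks cs). x \<le> y"
    using sorted_weave_below_above[OF _ len j] sorted by simp_all
  then show "\<forall>y\<in>set (weave inorder (take j ks) (take j cs)). y < x"
    and "\<forall>y\<in>set (weave_from inorder j ks cs). x \<le> y" .
  show "\<forall>y\<in>set (weave separators (take j ks) (take j cs)). y < x"
    using below set_weave_mono[of "take j cs" separators inorder "take j ks"]
      set_separators_subset_inorder by blast
  show "\<forall>y\<in>set (weave_from separators j ks cs). x \<le> y"
    using above set_weave_from_mono[of cs separators inorder j ks]
      set_separators_subset_inorder by blast
  have "length (take j ks) = length (take j cs)" using len jl by simp
  then show "length (concat (map leaves (take j cs))) = length (weave separators (take j ks) (take j cs))"
    using length_weave[of "take j ks" "take j cs" separators] length_concat_leaves[of "take j cs"] wfc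
    by (auto dest: in_set_takeD)
qed

fun result_tree :: "ins_result \<Rightarrow> btree" where
  "result_tree (Fit t) = t"
| "result_tree (Up l k r) = BNode [k] [l, r]"

lemma binsert_eq_result_tree: "binsert m x t = result_tree (bins m x t)"
  by (simp add: binsert_def split: ins_result.split)

lemma split_node_preserves:
  assumes "length cs = Suc (length ks)" "m < length ks"
  defines "t' \<equiv> BNode [ks ! m] [BNode (take m ks) (take (Suc m) cs), BNode (drop (Suc m) ks) (drop (Suc m) cs)]"
  shows "btree_frame t' = btree_frame (BNode ks cs)" "inorder t' = inorder (BNode ks cs)"
    "wf_btree t' = wf_btree (BNode ks cs)"
proof -
  have "concat (map leaves (take (Suc m) cs)) @ concat (map leaves (drop (Suc m) cs)) = concat (map leaves cs)"
    by (metis append_take_drop_id concat_append map_append)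
  then show "btree_frame t' = btree_frame (BNode ks cs)"
    using weave_at_key[OF assms(1,2), of separators] by (simp add: t'_def btree_frame_def)
  show "inorder t' = inorder (BNode ks cs)"
    using weave_at_key[OF assms(1,2), of inorder] by (simp add: t'_def)
  show "wf_btree t' = wf_btree (BNode ks cs)"
  proof -
    have "length (take (Suc m) cs) = Suc (length (take m ks))"
      "length (drop (Suc m) cs) = Suc (length (drop (Suc m) ks))"
      using assms(1,2) by auto
    moreover have "set cs = set (take (Suc m) cs) \<union> set (drop (Suc m) cs)"
      by (metis append_take_drop_id set_append)
    ultimately show ?thesis using assms(1) by (auto simp: t'_def)
  qed
qed

lemma frame_insert_node:
  assumes "wf_btree (BNode ks cs)" "sorted (inorder (BNode ks cs))" "j = length (filter (\<lambda>k. k < x) ks)"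
    and "btree_frame c' = frame_insert m x (btree_frame (cs ! j))" "inorder c' = insort x (inorder (cs ! j))"
  shows "frame_insert m x (btree_frame (BNode ks cs))
      = (concat (map leaves (take j cs)) @ leaves c' @ concat (map leaves (drop (Suc j) cs)),
         weave separators (take j ks) (take j cs) @ separators c' @ weave_from separators j ks cs)"
    and "insort x (inorder (BNode ks cs))
      = weave inorder (take j ks) (take j cs) @ inorder c' @ weave_from inorder j ks cs"
proof -
  note D = node_decomp_at_key[OF assms(1-3)]
  have "length (filter (\<lambda>s. s < x) (separators (cs ! j))) < length (leaves (cs ! j))"
    using length_leaves[OF D(2)] by (simp add: less_Suc_eq_le)
  then show "frame_insert m x (btree_frame (BNode ks cs))
      = (concat (map leaves (take j cs)) @ leaves c' @ concat (map leaves (drop (Suc j) cs)),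
         weave separators (take j ks) (take j cs) @ separators c' @ weave_from separators j ks cs)"
    using frame_insert_append[where L="leaves (cs ! j)" and S="separators (cs ! j)"] D(5-11)
    by (simp add: btree_frame_def assms(4)[unfolded btree_frame_def, symmetric])
  show "insort x (inorder (BNode ks cs))
      = weave inorder (take j ks) (take j cs) @ inorder c' @ weave_from inorder j ks cs"
    using D(4,7,8) assms(5) by (simp add: insort_append_left insort_append_right)
qed

lemma bins_correct:
  "wf_btree t \<Longrightarrow> sorted (inorder t) \<Longrightarrow>
     btree_frame (result_tree (bins m x t)) = frame_insert m x (btree_frame t)
     \<and> inorder (result_tree (bins m x t)) = insort x (inorder t)
     \<and> wf_btree (result_tree (bins m x t))"
proof (induction m x t rule: bins.induct)
  case (1 m x ks)
  have "take m l @ l ! m # drop (Suc m) l = l" if "m < length l" for l :: "nat list"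
    using id_take_nth_drop[OF that] by simp
  then show ?case by (simp add: btree_frame_def frame_insert_def Let_def)
next
  case (2 m x ks cs)
  define j where "j = length (filter (\<lambda>k. k < x) ks)"
  note D = node_decomp_at_key[OF "2.prems" j_def]
  have len: "length cs = Suc (length ks)" and wfc: "\<forall>c\<in>set cs. wf_btree c"
    using "2.prems" by auto
  define c' where "c' = result_tree (bins m x (cs ! j))"
  have IH: "btree_frame c' = frame_insert m x (btree_frame (cs ! j))"
    "inorder c' = insort x (inorder (cs ! j))" "wf_btree c'"
    using "2.IH"[OF j_def D(1)] D(2,3) by (simp_all add: c'_def)
  note node = frame_insert_node[OF "2.prems" j_def IH(1,2)]
  show ?case
  proof (cases "bins m x (cs ! j)")
    case (Fit c)
    then have c: "c = c'" and bins: "bins m x (BNode ks cs) = Fit (BNode ks (cs[j := c]))"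
      using D(1) by (simp_all add: c'_def Let_def flip: j_def)
    have upd: "cs[j := c] = take j cs @ c # drop (Suc j) cs"
      using D(1) by (simp add: upd_conv_take_nth_drop)
    have "weave f ks (cs[j := c]) = weave f (take j ks) (take j cs) @ f c @ weave_from f j ks cs" for f
      using weave_at[of "cs[j := c]" ks j f] len D(1) by (simp add: weave_from_def)
    moreover have "concat (map leaves (cs[j := c])) = concat (map leaves (take j cs)) @ leaves c
        @ concat (map leaves (drop (Suc j) cs))"
      unfolding upd by simp
    moreover have "wf_btree (BNode ks (cs[j := c]))"
      using len wfc IH(3) c by (auto dest: set_update_subset_insert[THEN subsetD])
    ultimately show ?thesis
      unfolding bins using node c by (simp add: btree_frame_def)
  next
    case (Up l k r)
    define ks' where "ks' = take j ks @ k # drop j ks"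
    define cs' where "cs' = take j cs @ l # r # drop (Suc j) cs"
    have c': "c' = BNode [k] [l, r]" using Up by (simp add: c'_def)
    have bins: "bins m x (BNode ks cs) = (if length ks' \<le> 2*m then Fit (BNode ks' cs')
        else Up (BNode (take m ks') (take (m+1) cs')) (ks' ! m) (BNode (drop (m+1) ks') (drop (m+1) cs')))"
      using Up D(1) by (simp add: Let_def ks'_def cs'_def flip: j_def)
    have len': "length cs' = Suc (length ks')" using len D(1) by (simp add: ks'_def cs'_def)
    have "btree_frame (BNode ks' cs') = frame_insert m x (btree_frame (BNode ks cs))"
      "inorder (BNode ks' cs') = insort x (inorder (BNode ks cs))"
      using node weave_insert_at[OF len D(1)] c' by (simp_all add: btree_frame_def ks'_def cs'_def)
    moreover have "wf_btree (BNode ks' cs')"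
      using len' wfc IH(3) c' by (auto simp: cs'_def dest: in_set_takeD in_set_dropD)
    ultimately show ?thesis
      unfolding bins using split_node_preserves[OF len', of m] by (cases "length ks' \<le> 2*m") simp_all
  qed
qed

lemma binsert_correct:
  assumes "wf_btree t" "sorted (inorder t)"
  shows "btree_frame (binsert m x t) = frame_insert m x (btree_frame t)"
    "sorted (inorder (binsert m x t))" "wf_btree (binsert m x t)"
  using bins_correct[OF assms, of m x] assms(2)
  by (simp_all add: binsert_eq_result_tree sorted_insort)

lemma leaf_idx_eq:
  "wf_btree t \<Longrightarrow> sorted (inorder t) \<Longrightarrow> leaf_idx x t = length (filter (\<lambda>s. s < x) (separators t))"
proof (induction x t rule: leaf_idx.induct)
  case (1 x ks)
  then show ?case by simp
next
  case (2 x ks cs)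
  define j where "j = length (filter (\<lambda>k. k < x) ks)"
  note D = node_decomp_at_key[OF "2.prems" j_def]
  have "sum_list (map nleaves (take j cs)) = length (concat (map leaves (take j cs)))"
    by (simp add: nleaves_eq_length_leaves[abs_def] length_concat comp_def)
  moreover have "leaf_idx x (cs ! j) = length (filter (\<lambda>s. s < x) (separators (cs ! j)))"
    using "2.IH"[OF j_def D(1)] D(2,3) .
  ultimately show ?case
    using D(1,5,9,10,11) by (simp add: j_def[symmetric] Let_def filter_empty_conv not_less)
qed

section \<open>Historic trees\<close>

fun ext_heights :: "nat \<Rightarrow> htree \<Rightarrow> nat list"
and ext_heights_slots :: "nat \<Rightarrow> hslot list \<Rightarrow> nat list" where
  "ext_heights h (HNode a ss) = ext_heights_slots (Suc h) ss"
| "ext_heights_slots h [] = []"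
| "ext_heights_slots h (Ext # ss) = h # ext_heights_slots h ss"
| "ext_heights_slots h (Sub t # ss) = ext_heights h t @ ext_heights_slots h ss"

lemma length_ext_heights:
  "length (ext_heights h t) = ext_tree t" "length (ext_heights_slots h ss) = ext_slots ss"
  by (induction t and ss arbitrary: h and h rule: ext_tree_ext_slots.induct) auto

lemma ext_heights_slots_replicate: "ext_heights_slots h (replicate k Ext) = replicate k h"
  by (induction k) auto

lemma ext_heights_hins:
  "i < ext_tree t \<Longrightarrow> ext_heights h (hins m h l i t) = take i (ext_heights h t)
     @ replicate (nslots m (ext_heights h t ! i)) (Suc (ext_heights h t ! i)) @ drop (Suc i) (ext_heights h t)"
  "i < ext_slots ss \<Longrightarrow> ext_heights_slots h (ins_slots m h l i ss) = take i (ext_heights_slots h ss)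
     @ replicate (nslots m (ext_heights_slots h ss ! i)) (Suc (ext_heights_slots h ss ! i))
     @ drop (Suc i) (ext_heights_slots h ss)"
proof (induction m h l i t and m h l i ss rule: hins_ins_slots.induct)
  case (3 m h l i ss)
  then show ?case by (cases i) (auto simp: ext_heights_slots_replicate)
next
  case (4 m h l i t ss)
  then show ?case
    by (cases "i < ext_tree t")
      (auto simp: nth_append length_ext_heights Suc_diff_le not_less)
qed simp_all

text \<open>An external vertex at height \<open>h\<close> corresponds to a leaf holding \<open>leaf_load m h\<close> keys:
  the load grows by one per level up to \<open>2m\<close>, and each branching splits a full leaf into two
  leaves with \<open>m\<close> keys.\<close>
definition leaf_load :: "nat \<Rightarrow> nat \<Rightarrow> nat" where
  "leaf_load m h = (if h \<le> 2*m then h else m + (h - Suc (2*m)) mod Suc m)"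

lemma leaf_load_le: "leaf_load m h \<le> 2*m"
  using mod_less_divisor[of "Suc m" "h - Suc (2*m)"] by (simp add: leaf_load_def)

lemma leaf_load_above:
  assumes "\<not> h \<le> 2*m"
  shows "leaf_load m h = 2*m \<longleftrightarrow> (h - 2*m) mod Suc m = 0"
    and "leaf_load m (Suc h) = (if leaf_load m h = 2*m then m else Suc (leaf_load m h))"
proof -
  define d where "d = h - Suc (2*m)"
  have hd: "h - 2*m = Suc d" and "Suc h - Suc (2*m) = Suc d" using assms by (auto simp: d_def)
  then have load: "leaf_load m h = m + d mod Suc m" "leaf_load m (Suc h) = m + Suc d mod Suc m"
    using assms by (auto simp: leaf_load_def d_def)
  have "d mod Suc m \<le> m" using mod_less_divisor[of "Suc m" d] by linarith
  moreover have "Suc d mod Suc m = (if d mod Suc m = m then 0 else Suc (d mod Suc m))"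
    by (simp add: mod_Suc)
  ultimately show "leaf_load m h = 2*m \<longleftrightarrow> (h - 2*m) mod Suc m = 0"
    and "leaf_load m (Suc h) = (if leaf_load m h = 2*m then m else Suc (leaf_load m h))"
    unfolding hd load by auto
qed

lemma nslots_eq: "nslots m h = (if leaf_load m h = 2*m then 2 else 1)"
  using leaf_load_above(1)[of h m]
  by (cases "h \<le> 2*m") (auto simp: leaf_load_def nslots_def Suc_diff_Suc numeral_2_eq_2)

lemma leaf_load_Suc:
  "leaf_load m (Suc h) = (if leaf_load m h = 2*m then m else Suc (leaf_load m h))"
  using leaf_load_above(2)[of h m] by (cases "h \<le> 2*m") (auto simp: leaf_load_def)

lemma replicate_nslots_leaf_load:
  "replicate (nslots m h) (leaf_load m (Suc h))
       = (if Suc (leaf_load m h) \<le> 2*m then [Suc (leaf_load m h)] else [m, m])"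
  using leaf_load_le[of m h] by (simp add: nslots_eq leaf_load_Suc numeral_2_eq_2)

lemma leaf_lengths_frame_insert:
  assumes "i = length (filter (\<lambda>s. s < x) ss)" "i < length ls" "length (ls ! i) \<le> 2*m"
  shows "map length (fst (frame_insert m x (ls, ss)))
       = take i (map length ls)
         @ (if Suc (length (ls ! i)) \<le> 2*m then [Suc (length (ls ! i))] else [m, m])
         @ drop (Suc i) (map length ls)"
  using assms
  by (auto simp: frame_insert_def Let_def map_update upd_conv_take_nth_drop take_map drop_map)

definition phi_invariant :: "nat \<Rightarrow> btree \<Rightarrow> htree \<Rightarrow> bool" where
  "phi_invariant m t H \<longleftrightarrow> wf_btree t \<and> sorted (inorder t)
     \<and> map length (leaves t) = map (leaf_load m) (ext_heights 0 H)"

lemma phi_invariant_step: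
  assumes "phi_invariant m t H"
  shows "phi_invariant m (binsert m x t) (hins m 0 l (leaf_idx x t) H)"
proof -
  define i where "i = leaf_idx x t"
  define E where "E = ext_heights 0 H"
  have wf: "wf_btree t" "sorted (inorder t)" and loads: "map length (leaves t) = map (leaf_load m) E"
    using assms by (auto simp: phi_invariant_def E_def)
  have i: "i = length (filter (\<lambda>s. s < x) (separators t))"
    using leaf_idx_eq[OF wf] by (simp add: i_def)
  have lenE: "length E = length (leaves t)" using loads by (metis length_map)
  have il: "i < length (leaves t)" using i length_leaves[OF wf(1)] by (simp add: less_Suc_eq_le)
  then have iE: "i < ext_tree H" using lenE length_ext_heights(1)[of 0 H] by (simp add: E_def)
  have load_i: "length (leaves t ! i) = leaf_load m (E ! i)"
    using arg_cong[OF loads, of "\<lambda>xs. xs ! i"] il lenE by simp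
  have "leaves (binsert m x t) = fst (frame_insert m x (leaves t, separators t))"
    using binsert_correct(1)[OF wf, of m x] by (metis btree_frame_def fst_conv)
  then have "map length (leaves (binsert m x t))
      = take i (map (leaf_load m) E) @ replicate (nslots m (E ! i)) (leaf_load m (Suc (E ! i)))
        @ drop (Suc i) (map (leaf_load m) E)"
    using leaf_lengths_frame_insert[OF i il, where m=m] leaf_load_le[of m "E ! i"] load_i loads
    by (simp add: replicate_nslots_leaf_load)
  also have "\<dots> = map (leaf_load m) (ext_heights 0 (hins m 0 l i H))"
    using ext_heights_hins(1)[OF iE] by (simp add: E_def take_map drop_map)
  finally show ?thesis
    using binsert_correct(2,3)[OF wf] by (simp add: phi_invariant_def i_def)
qed

definition frame_run :: "nat \<Rightarrow> frame \<Rightarrow> nat list \<Rightarrow> frame" where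
  "frame_run m fr xs = foldl (\<lambda>fr x. frame_insert m x fr) fr xs"

lemma frame_run_Cons: "frame_run m fr (x # xs) = frame_run m (frame_insert m x fr) xs"
  by (simp add: frame_run_def)

definition empty_frame :: frame where
  "empty_frame = ([[]], [])"

lemma phi_invariant_foldl:
  assumes "phi_invariant m t H" "foldl (phi_step m) (t, H, k) xs = (t', H', k')"
  shows "phi_invariant m t' H' \<and> btree_frame t' = frame_run m (btree_frame t) xs"
  using assms
proof (induction xs arbitrary: t H k)
  case Nil
  then show ?case by (simp add: frame_run_def)
next
  case (Cons x xs)
  have "phi_step m (t, H, k) x = (binsert m x t, hins m 0 (Suc k) (leaf_idx x t) H, Suc k)"
    by (simp add: phi_step_def)
  moreover have "btree_frame (binsert m x t) = frame_insert m x (btree_frame t)"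
    using Cons.prems(1) binsert_correct(1) by (simp add: phi_invariant_def)
  ultimately show ?case
    using Cons.IH[OF phi_invariant_step[OF Cons.prems(1)]] Cons.prems(2)
    by (simp add: frame_run_Cons)
qed

lemma ext_tree_phi:
  assumes "m \<ge> 1" "xs \<noteq> []"
  shows "ext_tree (phi m xs) = length (fst (frame_run m empty_frame xs))"
proof -
  obtain y ys where xs: "xs = y # ys" using assms(2) by (cases xs) auto
  obtain t' H' k' where fold:
    "foldl (phi_step m) (BLeaf [y], HNode 1 (replicate (nslots m 0) Ext), 1) ys = (t', H', k')"
    by (metis prod_cases3)
  have "phi_invariant m (BLeaf [y]) (HNode 1 (replicate (nslots m 0) Ext))"
    using assms(1) by (simp add: phi_invariant_def leaf_load_def nslots_def)
  then have inv: "phi_invariant m t' H'" and frame: "btree_frame t' = frame_run m ([[y]], []) ys"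
    using phi_invariant_foldl[OF _ fold] by (simp_all add: btree_frame_def)
  have "binsert m y (BLeaf []) = BLeaf [y]"
    using assms(1) by (simp add: binsert_def)
  then have "phi m xs = H'" using fold by (simp add: xs)
  moreover have "length (leaves t') = ext_tree H'"
    using inv by (metis phi_invariant_def length_map length_ext_heights(1))
  moreover have "frame_run m empty_frame xs = frame_run m ([[y]], []) ys"
    using assms(1) by (simp add: xs frame_run_Cons frame_insert_def empty_frame_def)
  ultimately show ?thesis using frame by (metis btree_frame_def fst_conv)
qed

section \<open>Counting leaves over insertion orders\<close>

lemma permutations_of_set_Un:
  assumes "A \<inter> B = {}"
  shows "permutations_of_set (A \<union> B)
       = (\<Union>(p, q)\<in>permutations_of_set A \<times> permutations_of_set B. shuffles p q)"
proof (intro equalityI subsetI)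
  fix zs assume zs: "zs \<in> permutations_of_set (A \<union> B)"
  then have "filter (\<lambda>x. x \<notin> A) zs = filter (\<lambda>x. x \<in> B) zs"
    using assms by (auto simp: permutations_of_set_def intro: filter_cong)
  then have "zs \<in> shuffles (filter (\<lambda>x. x \<in> A) zs) (filter (\<lambda>x. x \<in> B) zs)"
    using partition_in_shuffles[of zs "\<lambda>x. x \<in> A"] by simp
  moreover have "filter (\<lambda>x. x \<in> A) zs \<in> permutations_of_set A"
    "filter (\<lambda>x. x \<in> B) zs \<in> permutations_of_set B"
    using zs by (auto simp: permutations_of_set_def)
  ultimately show "zs \<in> (\<Union>(p, q)\<in>permutations_of_set A \<times> permutations_of_set B. shuffles p q)"
    by blast
next
  fix zs assume "zs \<in> (\<Union>(p, q)\<in>permutations_of_set A \<times> permutations_of_set B. shuffles p q)"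
  then obtain p q where p: "set p = A" "distinct p" and q: "set q = B" "distinct q"
    and zs: "zs \<in> shuffles p q"
    by (auto simp: permutations_of_set_def)
  show "zs \<in> permutations_of_set (A \<union> B)"
  proof
    show "set zs = A \<union> B" using set_shuffles[OF zs] p q by simp
    show "distinct zs" using distinct_disjoint_shuffles[OF p(2) q(2) _ zs] p q assms by simp
  qed
qed

lemma shuffles_permutations_of_set_unique:
  assumes "zs \<in> shuffles p q" "zs \<in> shuffles p' q'" "A \<inter> B = {}"
    "p \<in> permutations_of_set A" "q \<in> permutations_of_set B"
    "p' \<in> permutations_of_set A" "q' \<in> permutations_of_set B"
  shows "p = p' \<and> q = q'"
  using filter_shuffles_disjoint1[of p q zs] filter_shuffles_disjoint1[of p' q' zs] assms
  by (auto simp: permutations_of_set_def)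

lemma sum_permutations_of_set_Un:
  assumes "A \<inter> B = {}"
  shows "(\<Sum>zs\<in>permutations_of_set (A \<union> B). f zs)
       = (\<Sum>(p, q)\<in>permutations_of_set A \<times> permutations_of_set B. \<Sum>zs\<in>shuffles p q. f zs)"
proof -
  have "(\<Sum>zs\<in>(\<Union>pq\<in>permutations_of_set A \<times> permutations_of_set B. shuffles (fst pq) (snd pq)). f zs)
      = (\<Sum>pq\<in>permutations_of_set A \<times> permutations_of_set B. \<Sum>zs\<in>shuffles (fst pq) (snd pq). f zs)"
    by (rule sum.UNION_disjoint) (use shuffles_permutations_of_set_unique[OF _ _ assms] in \<open>auto simp: prod_eq_iff\<close>)
  then show ?thesis by (simp add: permutations_of_set_Un[OF assms] case_prod_unfold)
qed

definition leaf_gf :: "nat \<Rightarrow> frame \<Rightarrow> nat set \<Rightarrow> rat poly" where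
  "leaf_gf m fr A = (\<Sum>xs\<in>permutations_of_set A. monom 1 (length (fst (frame_run m fr xs))))"

lemma leaf_gf_empty: "leaf_gf m fr {} = monom 1 (length (fst fr))"
  by (simp add: leaf_gf_def frame_run_def)

lemma leaf_gf_first_key:
  assumes "finite A" "A \<noteq> {}"
  shows "leaf_gf m fr A = (\<Sum>x\<in>A. leaf_gf m (frame_insert m x fr) (A - {x}))"
proof -
  have "leaf_gf m fr A = (\<Sum>x\<in>A. \<Sum>xs\<in>(#) x ` permutations_of_set (A - {x}).
                              monom 1 (length (fst (frame_run m fr xs))))"
    unfolding leaf_gf_def permutations_of_set_nonempty[OF assms(2)]
    by (rule sum.UNION_disjoint) (use assms in auto)
  also have "\<dots> = (\<Sum>x\<in>A. leaf_gf m (frame_insert m x fr) (A - {x}))"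
    by (rule sum.cong) (auto simp: leaf_gf_def sum.reindex frame_run_Cons)
  finally show ?thesis .
qed

lemma poly_leaf_gf_1: "finite A \<Longrightarrow> poly (leaf_gf m fr A) 1 = of_nat (fact (card A))"
  by (simp add: leaf_gf_def poly_sum poly_monom)

definition frame_keys :: "frame \<Rightarrow> nat set" where
  "frame_keys fr = set (concat (fst fr)) \<union> set (snd fr)"

definition wf_frame :: "frame \<Rightarrow> bool" where
  "wf_frame fr \<longleftrightarrow> length (fst fr) = Suc (length (snd fr))"

lemma frame_insert_wf_keys:
  assumes "wf_frame fr"
  shows "wf_frame (frame_insert m x fr)" "frame_keys (frame_insert m x fr) = insert x (frame_keys fr)"
proof -
  obtain ls ss where fr: "fr = (ls, ss)" by (cases fr)
  define i where "i = length (filter (\<lambda>s. s < x) ss)"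
  define l where "l = insort x (ls ! i)"
  define L where "L = set (concat (take i ls)) \<union> set (concat (drop (Suc i) ls))"
  have i: "i < length ls" "i \<le> length ss"
    using assms by (auto simp: fr i_def wf_frame_def less_Suc_eq_le)
  have "frame_keys fr = L \<union> set (ls ! i) \<union> set ss"
    using arg_cong[OF id_take_nth_drop[OF i(1)], of "\<lambda>ls. set (concat ls)"]
    by (auto simp: fr frame_keys_def L_def)
  moreover have "set l = insert x (set (ls ! i))" by (simp add: l_def set_insort_key)
  moreover have fi: "frame_insert m x fr = (if length l \<le> 2*m then (ls[i := l], ss)
      else (take i ls @ take m l # drop (Suc m) l # drop (Suc i) ls, take i ss @ l ! m # drop i ss))"
    by (simp add: fr frame_insert_def Let_def i_def l_def)
  moreover have "wf_frame (frame_insert m x fr) \<and> frame_keys (frame_insert m x fr) = L \<union> set l \<union> set ss"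
  proof (cases "length l \<le> 2*m")
    case True
    then have "frame_insert m x fr = (take i ls @ l # drop (Suc i) ls, ss)"
      using i fi by (simp add: upd_conv_take_nth_drop)
    then show ?thesis using assms i by (auto simp: fr wf_frame_def frame_keys_def L_def)
  next
    case False
    then have "frame_insert m x fr
        = (take i ls @ take m l # drop (Suc m) l # drop (Suc i) ls, take i ss @ l ! m # drop i ss)"
      using fi by simp
    moreover have "m < length l" using False by simp
    then have "set l = set (take m l) \<union> insert (l ! m) (set (drop (Suc m) l))"
      by (subst (1) id_take_nth_drop) simp_all
    moreover have "set ss = set (take i ss) \<union> set (drop i ss)"
      by (metis append_take_drop_id set_append)
    ultimately show ?thesis using assms i by (auto simp: fr wf_frame_def frame_keys_def L_def)
  qed
  ultimately show "wf_frame (frame_insert m x fr)"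
      "frame_keys (frame_insert m x fr) = insert x (frame_keys fr)"
    by auto
qed

definition frame_join :: "frame \<Rightarrow> nat \<Rightarrow> frame \<Rightarrow> frame" where
  "frame_join fl k fr = (fst fl @ fst fr, snd fl @ k # snd fr)"

lemma frame_insert_join_left:
  assumes "wf_frame fl" "\<forall>y\<in>frame_keys fr. k < y" "x < k"
  shows "frame_insert m x (frame_join fl k fr) = frame_join (frame_insert m x fl) k fr"
proof -
  have "y = k \<or> k < y" if "y \<in> set (k # snd fr)" for y
    using that assms(2) by (auto simp: frame_keys_def)
  then have "\<forall>y\<in>set (k # snd fr). x \<le> y" using assms(3) by fastforce
  moreover have "length (filter (\<lambda>s. s < x) (snd fl)) < length (fst fl)"
    using assms(1) by (simp add: wf_frame_def less_Suc_eq_le)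
  ultimately show ?thesis
    using frame_insert_append[of "[]" "[]" x "k # snd fr" "snd fl" "fst fl" m "fst fr"]
    by (simp add: frame_join_def)
qed

lemma frame_insert_join_right:
  assumes "wf_frame fl" "wf_frame fr" "\<forall>y\<in>frame_keys fl. y < k" "k < x"
  shows "frame_insert m x (frame_join fl k fr) = frame_join fl k (frame_insert m x fr)"
proof -
  have "y = k \<or> y < k" if "y \<in> set (snd fl @ [k])" for y
    using that assms(3) by (auto simp: frame_keys_def)
  then have "\<forall>y\<in>set (snd fl @ [k]). y < x" using assms(4) by fastforce
  moreover have "length (filter (\<lambda>s. s < x) (snd fr)) < length (fst fr)"
    using assms(2) by (simp add: wf_frame_def less_Suc_eq_le)
  ultimately show ?thesis
    using frame_insert_append[of "fst fl" "snd fl @ [k]" x "[]" "snd fr" "fst fr" m "[]"] assms(1)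
    by (simp add: frame_join_def wf_frame_def)
qed

lemma frame_run_join:
  assumes "wf_frame fl" "wf_frame fr" "\<forall>y\<in>frame_keys fl. y < k" "\<forall>y\<in>frame_keys fr. k < y"
    "k \<notin> set xs"
  shows "frame_run m (frame_join fl k fr) xs
       = frame_join (frame_run m fl (filter (\<lambda>y. y < k) xs)) k (frame_run m fr (filter (\<lambda>y. k < y) xs))"
  using assms
proof (induction xs arbitrary: fl fr)
  case Nil
  then show ?case by (simp add: frame_run_def)
next
  case (Cons x xs)
  show ?case
  proof (cases "x < k")
    case True
    then show ?thesis
      using Cons.IH[of "frame_insert m x fl" fr] Cons.prems frame_insert_wf_keys[OF Cons.prems(1)]
      by (simp add: frame_run_Cons frame_insert_join_left)
  next
    case False
    then have "k < x" using Cons.prems(5) by simp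
    then show ?thesis
      using Cons.IH[of fl "frame_insert m x fr"] Cons.prems frame_insert_wf_keys[OF Cons.prems(2)]
      by (simp add: frame_run_Cons frame_insert_join_right)
  qed
qed

lemma leaf_gf_join:
  assumes "wf_frame fl" "wf_frame fr"
    "\<forall>y\<in>frame_keys fl \<union> AL. y < k" "\<forall>y\<in>frame_keys fr \<union> AR. k < y"
  shows "leaf_gf m (frame_join fl k fr) (AL \<union> AR)
       = of_nat (card AL + card AR choose card AL) * leaf_gf m fl AL * leaf_gf m fr AR"
proof -
  have below: "\<forall>y\<in>AL. y < k" and above: "\<forall>y\<in>AR. k < y" using assms(3,4) by auto
  then have disj: "AL \<inter> AR = {}" by (auto dest: less_asym)
  define g :: "nat list \<Rightarrow> nat list \<Rightarrow> rat poly"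
    where "g p q = monom 1 (length (fst (frame_run m fl p))) * monom 1 (length (fst (frame_run m fr q)))"
    for p q
  have card: "card (shuffles p q) = card AL + card AR choose card AL"
    if "p \<in> permutations_of_set AL" "q \<in> permutations_of_set AR" for p q
    using card_disjoint_shuffles[of p q] disj that
    by (auto simp: length_finite_permutations_of_set permutations_of_set_def)
  have run: "monom 1 (length (fst (frame_run m (frame_join fl k fr) zs))) = g p q"
    if p: "p \<in> permutations_of_set AL" and q: "q \<in> permutations_of_set AR" and zs: "zs \<in> shuffles p q"
    for p q zs
  proof -
    have sets: "set p = AL" "set q = AR" "set zs = AL \<union> AR"
      using p q set_shuffles[OF zs] by (auto simp: permutations_of_set_def)
    have "filter (\<lambda>y. y < k) zs = filter (\<lambda>y. y \<in> set p) zs"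
      "filter (\<lambda>y. k < y) zs = filter (\<lambda>y. y \<notin> set p) zs"
      using sets below above disj by (auto intro!: filter_cong dest: less_asym)
    then have "filter (\<lambda>y. y < k) zs = p" "filter (\<lambda>y. k < y) zs = q"
      using filter_shuffles_disjoint1[OF _ zs] sets disj by simp_all
    moreover have "k \<notin> set zs" using sets below above by blast
    ultimately show ?thesis
      using frame_run_join[OF assms(1,2)] assms(3,4)
      by (simp add: g_def frame_join_def mult_monom)
  qed
  have "leaf_gf m (frame_join fl k fr) (AL \<union> AR)
      = (\<Sum>(p, q)\<in>permutations_of_set AL \<times> permutations_of_set AR.
           \<Sum>zs\<in>shuffles p q. monom 1 (length (fst (frame_run m (frame_join fl k fr) zs))))"
    unfolding leaf_gf_def by (rule sum_permutations_of_set_Un[OF disj])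
  also have "\<dots> = (\<Sum>(p, q)\<in>permutations_of_set AL \<times> permutations_of_set AR.
           of_nat (card AL + card AR choose card AL) * g p q)"
    by (rule sum.cong) (auto simp: run card of_nat_poly)
  also have "\<dots> = of_nat (card AL + card AR choose card AL)
      * (\<Sum>(p, q)\<in>permutations_of_set AL \<times> permutations_of_set AR. g p q)"
    by (simp add: sum_distrib_left case_prod_unfold)
  also have "(\<Sum>(p, q)\<in>permutations_of_set AL \<times> permutations_of_set AR. g p q)
      = leaf_gf m fl AL * leaf_gf m fr AR"
    unfolding leaf_gf_def sum_product sum.cartesian_product g_def ..
  finally show ?thesis by (simp add: mult.assoc)
qed

definition frame_shift :: "nat \<Rightarrow> frame \<Rightarrow> frame" where
  "frame_shift c fr = (map (map (\<lambda>y. y + c)) (fst fr), map (\<lambda>y. y + c) (snd fr))"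

lemma insort_shift: "insort (x + c) (map (\<lambda>y. y + (c::nat)) l) = map (\<lambda>y. y + c) (insort x l)"
  by (induction l) auto

lemma frame_insert_shift:
  assumes "wf_frame fr"
  shows "frame_insert m (x + c) (frame_shift c fr) = frame_shift c (frame_insert m x fr)"
proof -
  obtain ls ss where fr: "fr = (ls, ss)" by (cases fr)
  have "length (filter (\<lambda>s. s < x + c) (map (\<lambda>y. y + c) ss)) = length (filter (\<lambda>s. s < x) ss)"
    by (simp add: filter_map comp_def)
  moreover have "length (filter (\<lambda>s. s < x) ss) < length ls"
    using assms by (simp add: fr wf_frame_def less_Suc_eq_le)
  ultimately show ?thesis
    by (simp add: fr frame_shift_def frame_insert_def Let_def insort_shift map_update take_map drop_map)
qed

lemma frame_run_shift:
  "wf_frame fr \<Longrightarrow> frame_run m (frame_shift c fr) (map (\<lambda>y. y + c) xs) = frame_shift c (frame_run m fr xs)"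
  by (induction xs arbitrary: fr) (simp_all add: frame_run_def frame_insert_shift frame_insert_wf_keys)

lemma leaf_gf_shift:
  assumes "wf_frame fr"
  shows "leaf_gf m (frame_shift c fr) ((\<lambda>y. y + c) ` A) = leaf_gf m fr A"
proof -
  have "inj_on (map (\<lambda>y. y + c)) (permutations_of_set A)" by (auto intro: inj_onI simp: map_eq_conv)
  then show ?thesis
    by (simp add: leaf_gf_def permutations_of_set_image_inj sum.reindex frame_run_shift[OF assms])
      (simp add: frame_shift_def)
qed

lemma sum_insert_subsets:
  fixes F :: "'a set \<Rightarrow> 'b::comm_semiring_1"
  assumes A: "finite A"
  shows "(\<Sum>J | J \<subseteq> A \<and> card J = j. \<Sum>y\<in>A - J. F (insert y J))
       = of_nat (Suc j) * (\<Sum>Q | Q \<subseteq> A \<and> card Q = Suc j. F Q)"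
proof -
  have fin: "finite {J. J \<subseteq> A \<and> card J = i}" for i
    using A by (auto intro: finite_subset[of _ "Pow A"])
  have "(\<Sum>J | J \<subseteq> A \<and> card J = j. \<Sum>y\<in>A - J. F (insert y J))
      = (\<Sum>(J, y)\<in>Sigma {J. J \<subseteq> A \<and> card J = j} (\<lambda>J. A - J). F (insert y J))"
    using fin A by (intro sum.Sigma) auto
  also have "\<dots> = (\<Sum>(Q, y)\<in>Sigma {Q. Q \<subseteq> A \<and> card Q = Suc j} (\<lambda>Q. Q). F Q)"
    using A by (intro sum.reindex_bij_witness[of _ "\<lambda>(Q, y). (Q - {y}, y)" "\<lambda>(J, y). (insert y J, y)"])
      (auto simp: card_insert_if finite_subset card_Diff1_le intro: finite_subset)
  also have "\<dots> = (\<Sum>Q | Q \<subseteq> A \<and> card Q = Suc j. of_nat (card Q) * F Q)"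
    using fin A by (subst sum.Sigma[symmetric]) (auto intro: finite_subset)
  also have "\<dots> = of_nat (Suc j) * (\<Sum>Q | Q \<subseteq> A \<and> card Q = Suc j. F Q)"
    by (simp add: sum_distrib_left)
  finally show ?thesis .
qed

lemma leaf_gf_prefix:
  assumes A: "finite A" and "j \<le> card A"
    and step: "\<And>J y. J \<subseteq> A \<Longrightarrow> card J < j \<Longrightarrow> y \<in> A - J \<Longrightarrow> frame_insert m y (fr J) = fr (insert y J)"
  shows "leaf_gf m (fr {}) A = of_nat (fact j) * (\<Sum>J | J \<subseteq> A \<and> card J = j. leaf_gf m (fr J) (A - J))"
  using assms(2,3)
proof (induction j)
  case 0
  have "{J. J \<subseteq> A \<and> card J = 0} = {{}}" using A by (auto dest: finite_subset)
  then show ?case by simp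
next
  case (Suc j)
  have "leaf_gf m (fr J) (A - J) = (\<Sum>y\<in>A - J. leaf_gf m (fr (insert y J)) (A - insert y J))"
    if J: "J \<subseteq> A" "card J = j" for J
  proof -
    have "card J < card A" using J Suc.prems(1) by simp
    then have "A - J \<noteq> {}" using card_mono[of J A] finite_subset[OF J(1) A] by auto
    then have "leaf_gf m (fr J) (A - J) = (\<Sum>y\<in>A - J. leaf_gf m (frame_insert m y (fr J)) (A - J - {y}))"
      using A by (simp add: leaf_gf_first_key)
    also have "\<dots> = (\<Sum>y\<in>A - J. leaf_gf m (fr (insert y J)) (A - insert y J))"
    proof (rule sum.cong)
      fix y assume y: "y \<in> A - J"
      have "frame_insert m y (fr J) = fr (insert y J)" using Suc.prems(2)[OF J(1) _ y] J(2) by simp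
      moreover have "A - J - {y} = A - insert y J" by auto
      ultimately show "leaf_gf m (frame_insert m y (fr J)) (A - J - {y})
          = leaf_gf m (fr (insert y J)) (A - insert y J)" by simp
    qed simp
    finally show ?thesis .
  qed
  then have "leaf_gf m (fr {}) A = of_nat (fact j)
      * (\<Sum>J | J \<subseteq> A \<and> card J = j. \<Sum>y\<in>A - J. leaf_gf m (fr (insert y J)) (A - insert y J))"
    using Suc by simp
  also have "\<dots> = of_nat (fact (Suc j)) * (\<Sum>J | J \<subseteq> A \<and> card J = Suc j. leaf_gf m (fr J) (A - J))"
    using sum_insert_subsets[OF A, where F="\<lambda>Q. leaf_gf m (fr Q) (A - Q)"] by (simp add: algebra_simps)
  finally show ?case .
qed

text \<open>The frame reached by inserting the keys of \<open>Q\<close> into the empty tree, provided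
  \<open>card Q \<le> 2m+1\<close>.\<close>
definition initial_frame :: "nat \<Rightarrow> nat set \<Rightarrow> frame" where
  "initial_frame m Q = (let q = sorted_list_of_set Q in
     if card Q \<le> 2*m then ([q], []) else ([take m q, drop (Suc m) q], [q ! m]))"

lemma empty_frame_eq_initial_frame: "empty_frame = initial_frame m {}"
  by (simp add: empty_frame_def initial_frame_def)

lemma frame_insert_initial_frame:
  assumes "finite Q" "y \<notin> Q" "card Q \<le> 2*m"
  shows "frame_insert m y (initial_frame m Q) = initial_frame m (insert y Q)"
  using assms by (simp add: initial_frame_def frame_insert_def Let_def sorted_list_of_set_insert)

lemma leaf_gf_initial_frames:
  assumes "finite A" "j \<le> card A" "j \<le> Suc (2*m)"
  shows "leaf_gf m empty_frame A
       = of_nat (fact j) * (\<Sum>J | J \<subseteq> A \<and> card J = j. leaf_gf m (initial_frame m J) (A - J))"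
  unfolding empty_frame_eq_initial_frame[of m]
  using assms by (intro leaf_gf_prefix frame_insert_initial_frame) (auto intro: finite_subset)

lemma sorted_list_of_set_Un_insert:
  assumes "finite L" "finite R" "\<forall>y\<in>L. y < k" "\<forall>y\<in>R. k < y"
  shows "sorted_list_of_set (L \<union> insert k R) = sorted_list_of_set L @ k # sorted_list_of_set R"
proof -
  have "L \<inter> insert k R = {}" "k \<notin> R" using assms(3,4) by (auto dest: less_asym)
  moreover have "\<forall>x\<in>L. \<forall>y\<in>R. x < y" using assms(3,4) by (meson less_trans)
  ultimately show ?thesis
    using assms by (subst sorted_list_of_set_unique[symmetric]) (auto simp: sorted_wrt_append card_Un_disjoint)
qed

lemma initial_frame_join:
  assumes "finite L" "finite R" "\<forall>y\<in>L. y < k" "\<forall>y\<in>R. k < y" "card L = m" "card R = m"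
  shows "initial_frame m (L \<union> insert k R) = frame_join (initial_frame m L) k (initial_frame m R)"
proof -
  have "L \<inter> insert k R = {}" "k \<notin> R" using assms(3,4) by (auto dest: less_asym)
  then have "card (L \<union> insert k R) = Suc (2*m)" using assms by (simp add: card_Un_disjoint)
  then show ?thesis
    using assms sorted_list_of_set_Un_insert[OF assms(1-4)]
    by (simp add: initial_frame_def frame_join_def nth_append)
qed

lemma initial_frame_small:
  "finite L \<Longrightarrow> card L \<le> 2*m \<Longrightarrow> wf_frame (initial_frame m L) \<and> frame_keys (initial_frame m L) = L"
  by (simp add: initial_frame_def wf_frame_def frame_keys_def)

lemma median_split:
  assumes "finite Q" "card Q = Suc (2*m)"
  defines "q \<equiv> sorted_list_of_set Q"
  shows "Q = set (take m q) \<union> insert (q ! m) (set (drop (Suc m) q))"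
    "\<forall>y\<in>set (take m q). y < q ! m" "\<forall>y\<in>set (drop (Suc m) q). q ! m < y"
    "card (set (take m q)) = m" "card (set (drop (Suc m) q)) = m"
proof -
  have len: "m < length q" "length q = Suc (2*m)" using assms by (simp_all add: q_def)
  then have q: "q = take m q @ q ! m # drop (Suc m) q" by (simp add: id_take_nth_drop)
  have "sorted_wrt (<) q" "distinct q" "set q = Q" using assms(1) by (simp_all add: q_def)
  then have "sorted_wrt (<) (take m q @ q ! m # drop (Suc m) q)" "distinct (take m q @ q ! m # drop (Suc m) q)"
    using q by simp_all
  then show "\<forall>y\<in>set (take m q). y < q ! m" "\<forall>y\<in>set (drop (Suc m) q). q ! m < y"
    "card (set (take m q)) = m" "card (set (drop (Suc m) q)) = m"
    using len by (auto simp: sorted_wrt_append distinct_card)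
  show "Q = set (take m q) \<union> insert (q ! m) (set (drop (Suc m) q))"
    using q \<open>set q = Q\<close> by (metis Un_insert_right list.simps(15) set_append)
qed

lemma sum_subsets_by_median:
  fixes F :: "nat set \<Rightarrow> 'b::comm_monoid_add"
  assumes A: "finite A"
  shows "(\<Sum>Q | Q \<subseteq> A \<and> card Q = Suc (2*m). F Q)
       = (\<Sum>k\<in>A. \<Sum>L | L \<subseteq> {y\<in>A. y < k} \<and> card L = m.
                   \<Sum>R | R \<subseteq> {y\<in>A. k < y} \<and> card R = m. F (L \<union> insert k R))"
proof -
  define S where "S = Sigma A (\<lambda>k. {L. L \<subseteq> {y\<in>A. y < k} \<and> card L = m} \<times> {R. R \<subseteq> {y\<in>A. k < y} \<and> card R = m})"
  have fin: "finite {L. L \<subseteq> B \<and> card L = m}" if "B \<subseteq> A" for B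
    using A that by (auto intro: finite_subset[of _ "Pow A"])
  have "(\<Sum>Q | Q \<subseteq> A \<and> card Q = Suc (2*m). F Q) = (\<Sum>(k, L, R)\<in>S. F (L \<union> insert k R))"
  proof (rule sum.reindex_bij_witness[symmetric,
        of _ "\<lambda>Q. let q = sorted_list_of_set Q in (q ! m, set (take m q), set (drop (Suc m) q))"
        "\<lambda>(k, L, R). L \<union> insert k R"])
    fix t assume "t \<in> S"
    then obtain k L R where t: "t = (k, L, R)" "k \<in> A" "L \<subseteq> {y\<in>A. y < k}" "card L = m"
      "R \<subseteq> {y\<in>A. k < y}" "card R = m"
      by (auto simp: S_def)
    then have LR: "finite L" "finite R" "\<forall>y\<in>L. y < k" "\<forall>y\<in>R. k < y"
      using A by (auto intro: finite_subset)
    show "(let q = sorted_list_of_set (case t of (k, L, R) \<Rightarrow> L \<union> insert k R)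
           in (q ! m, set (take m q), set (drop (Suc m) q))) = t"
      using sorted_list_of_set_Un_insert[OF LR] t LR by (simp add: nth_append)
    have "L \<inter> insert k R = {}" "k \<notin> R" using LR by (auto dest: less_asym)
    then show "(case t of (k, L, R) \<Rightarrow> L \<union> insert k R) \<in> {Q. Q \<subseteq> A \<and> card Q = Suc (2*m)}"
      using t LR by (auto simp: card_Un_disjoint)
  next
    fix Q assume "Q \<in> {Q. Q \<subseteq> A \<and> card Q = Suc (2*m)}"
    then have Q: "Q \<subseteq> A" "finite Q" "card Q = Suc (2*m)" using A by (auto intro: finite_subset)
    note M = median_split[OF Q(2,3)]
    show "(case let q = sorted_list_of_set Q in (q ! m, set (take m q), set (drop (Suc m) q)) of
           (k, L, R) \<Rightarrow> L \<union> insert k R) = Q"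
      using M(1) by (simp add: Let_def)
    show "(let q = sorted_list_of_set Q in (q ! m, set (take m q), set (drop (Suc m) q))) \<in> S"
      using M Q(1) by (auto simp: S_def Let_def)
  qed (simp add: split_beta)
  also have "\<dots> = (\<Sum>k\<in>A. \<Sum>L | L \<subseteq> {y\<in>A. y < k} \<and> card L = m.
                   \<Sum>R | R \<subseteq> {y\<in>A. k < y} \<and> card R = m. F (L \<union> insert k R))"
    unfolding S_def using A fin by (simp add: sum.Sigma[symmetric] sum.cartesian_product[symmetric])
  finally show ?thesis .
qed

lemma sum_initial_frames_card_m:
  assumes "finite B"
  shows "of_nat (fact m) * (\<Sum>L | L \<subseteq> B \<and> card L = m. leaf_gf m (initial_frame m L) (B - L))
       = (if m \<le> card B then leaf_gf m empty_frame B else 0)"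
proof (cases "m \<le> card B")
  case True
  then show ?thesis using leaf_gf_initial_frames[OF assms, of m m] by simp
next
  case False
  then have "{L. L \<subseteq> B \<and> card L = m} = {}" using assms card_mono by fastforce
  then show ?thesis using False by (simp only: sum.empty) simp
qed

lemma leaf_gf_initial_frame_median:
  assumes A: "finite A" "k \<in> A"
    and L: "L \<subseteq> {y\<in>A. y < k}" "card L = m" and R: "R \<subseteq> {y\<in>A. k < y}" "card R = m"
  defines "AL \<equiv> {y\<in>A. y < k}" and "AR \<equiv> {y\<in>A. k < y}"
  shows "leaf_gf m (initial_frame m (L \<union> insert k R)) (A - (L \<union> insert k R))
       = of_nat (card AL - m + (card AR - m) choose (card AL - m))
         * leaf_gf m (initial_frame m L) (AL - L) * leaf_gf m (initial_frame m R) (AR - R)"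
proof -
  have fin: "finite AL" "finite AR" "finite L" "finite R"
    using A L R by (auto simp: AL_def AR_def intro: finite_subset)
  have "A - (L \<union> insert k R) = (AL - L) \<union> (AR - R)"
    using L R A by (auto simp: AL_def AR_def)
  moreover have "initial_frame m (L \<union> insert k R) = frame_join (initial_frame m L) k (initial_frame m R)"
    using fin L R by (intro initial_frame_join) auto
  moreover have "card (AL - L) = card AL - m" "card (AR - R) = card AR - m"
    using L R fin by (simp_all add: card_Diff_subset AL_def AR_def)
  moreover have "wf_frame (initial_frame m L)" "frame_keys (initial_frame m L) = L"
    "wf_frame (initial_frame m R)" "frame_keys (initial_frame m R) = R"
    using initial_frame_small[of L m] initial_frame_small[of R m] fin L R by simp_all
  moreover have "\<forall>y\<in>L \<union> (AL - L). y < k" "\<forall>y\<in>R \<union> (AR - R). k < y"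
    using L R by (auto simp: AL_def AR_def)
  ultimately show ?thesis
    using leaf_gf_join[of "initial_frame m L" "initial_frame m R" "AL - L" k "AR - R" m]
    by simp
qed

lemma leaf_gf_recursion:
  assumes A: "finite A" "Suc (2*m) \<le> card A"
  shows "of_nat (fact m) ^ 2 * leaf_gf m empty_frame A = of_nat (fact (Suc (2*m))) *
    (\<Sum>k | k \<in> A \<and> m \<le> card {y\<in>A. y < k} \<and> m \<le> card {y\<in>A. k < y}.
       of_nat (card {y\<in>A. y < k} - m + (card {y\<in>A. k < y} - m) choose (card {y\<in>A. y < k} - m))
       * leaf_gf m empty_frame {y\<in>A. y < k} * leaf_gf m empty_frame {y\<in>A. k < y})"
proof -
  define C where "C k = (of_nat (card {y\<in>A. y < k} - m + (card {y\<in>A. k < y} - m)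
                         choose (card {y\<in>A. y < k} - m)) :: rat poly)" for k
  define GL where "GL k L = leaf_gf m (initial_frame m L) ({y\<in>A. y < k} - L)" for k L
  define GR where "GR k R = leaf_gf m (initial_frame m R) ({y\<in>A. k < y} - R)" for k R
  define P where "P B = (if m \<le> card B then leaf_gf m empty_frame B else 0)" for B
  have "leaf_gf m empty_frame A = of_nat (fact (Suc (2*m)))
      * (\<Sum>Q | Q \<subseteq> A \<and> card Q = Suc (2*m). leaf_gf m (initial_frame m Q) (A - Q))"
    using leaf_gf_initial_frames[OF A order.refl] .
  also have "(\<Sum>Q | Q \<subseteq> A \<and> card Q = Suc (2*m). leaf_gf m (initial_frame m Q) (A - Q))
      = (\<Sum>k\<in>A. \<Sum>L | L \<subseteq> {y\<in>A. y < k} \<and> card L = m.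
                 \<Sum>R | R \<subseteq> {y\<in>A. k < y} \<and> card R = m. C k * GL k L * GR k R)"
    unfolding sum_subsets_by_median[OF A(1)] C_def GL_def GR_def
    by (intro sum.cong refl leaf_gf_initial_frame_median[OF A(1)]) auto
  finally have "of_nat (fact m) ^ 2 * leaf_gf m empty_frame A = of_nat (fact (Suc (2*m)))
      * (\<Sum>k\<in>A. C k * (of_nat (fact m) * (\<Sum>L | L \<subseteq> {y\<in>A. y < k} \<and> card L = m. GL k L))
                     * (of_nat (fact m) * (\<Sum>R | R \<subseteq> {y\<in>A. k < y} \<and> card R = m. GR k R)))"
    by (simp add: sum_distrib_left sum_product power2_eq_square algebra_simps)
  also have "of_nat (fact m) * (\<Sum>L | L \<subseteq> {y\<in>A. y < k} \<and> card L = m. GL k L) = P {y\<in>A. y < k}"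
    and "of_nat (fact m) * (\<Sum>R | R \<subseteq> {y\<in>A. k < y} \<and> card R = m. GR k R) = P {y\<in>A. k < y}" for k
    using sum_initial_frames_card_m[of "{y\<in>A. y < k}" m] sum_initial_frames_card_m[of "{y\<in>A. k < y}" m] A(1)
    by (simp_all add: GL_def GR_def P_def)
  then have "(\<Sum>k\<in>A. C k * (of_nat (fact m) * (\<Sum>L | L \<subseteq> {y\<in>A. y < k} \<and> card L = m. GL k L))
                     * (of_nat (fact m) * (\<Sum>R | R \<subseteq> {y\<in>A. k < y} \<and> card R = m. GR k R)))
      = (\<Sum>k\<in>A. C k * P {y\<in>A. y < k} * P {y\<in>A. k < y})"
    by simp
  also have "(\<Sum>k\<in>A. C k * P {y\<in>A. y < k} * P {y\<in>A. k < y})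
      = (\<Sum>k | k \<in> A \<and> m \<le> card {y\<in>A. y < k} \<and> m \<le> card {y\<in>A. k < y}.
           C k * leaf_gf m empty_frame {y\<in>A. y < k} * leaf_gf m empty_frame {y\<in>A. k < y})"
    using A(1) by (auto simp: sum.inter_filter P_def intro!: sum.cong)
  finally show ?thesis unfolding C_def .
qed

definition leaf_poly :: "nat \<Rightarrow> nat \<Rightarrow> rat poly" where
  "leaf_poly m N = leaf_gf m empty_frame {1..N}"

lemma leaf_gf_greaterThanAtMost: "leaf_gf m empty_frame {k<..N} = leaf_poly m (N - k)"
proof -
  have "(\<lambda>y. y + k) ` {1..N - k} = {k<..N}"
  proof (intro equalityI subsetI)
    fix y assume "y \<in> {k<..N}"
    then have "y - k \<in> {1..N - k}" "y = (y - k) + k" by auto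
    then show "y \<in> (\<lambda>y. y + k) ` {1..N - k}" by blast
  qed auto
  moreover have "frame_shift k empty_frame = empty_frame" by (simp add: frame_shift_def empty_frame_def)
  ultimately show ?thesis
    using leaf_gf_shift[of empty_frame m k "{1..N - k}"]
    by (simp add: leaf_poly_def wf_frame_def empty_frame_def)
qed

lemma leaf_poly_small:
  assumes "N \<le> 2*m"
  shows "leaf_poly m N = smult (of_nat (fact N)) [:0, 1:]"
proof -
  have "J = {1..N}" if "J \<subseteq> {1..N}" "card J = N" for J
    using that card_subset_eq[of "{1..N}" J] by simp
  then have "{J. J \<subseteq> {1..N} \<and> card J = N} = {{1..N}}" by auto
  moreover have "length (fst (initial_frame m {1..N})) = 1"
    using assms by (simp add: initial_frame_def Let_def)
  ultimately show ?thesis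
    using leaf_gf_initial_frames[of "{1..N}" N m] assms
    by (simp add: leaf_poly_def leaf_gf_empty monom_altdef of_nat_poly)
qed

lemma poly_leaf_poly_1: "poly (leaf_poly m N) 1 = of_nat (fact N)"
  by (simp add: leaf_poly_def poly_leaf_gf_1)

lemma leaf_poly_recursion:
  "of_nat (fact m) ^ 2 * leaf_poly m (n + Suc (2*m)) = of_nat (fact (Suc (2*m)))
     * (\<Sum>i\<le>n. of_nat (n choose i) * leaf_poly m (i + m) * leaf_poly m (n - i + m))"
proof -
  define N where "N = n + Suc (2*m)"
  define F where "F k = of_nat (card {y\<in>{1..N}. y < k} - m + (card {y\<in>{1..N}. k < y} - m)
      choose (card {y\<in>{1..N}. y < k} - m))
      * leaf_gf m empty_frame {y\<in>{1..N}. y < k} * leaf_gf m empty_frame {y\<in>{1..N}. k < y}" for k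
  have sets: "{y\<in>{1..N}. y < k} = {1..k - 1}" "{y\<in>{1..N}. k < y} = {k<..N}" if "k \<le> N" for k
    using that by auto
  then have cards: "card {y\<in>{1..N}. y < k} = k - 1" "card {y\<in>{1..N}. k < y} = N - k" if "k \<le> N" for k
    using that by simp_all
  have "{k. k \<in> {1..N} \<and> m \<le> card {y\<in>{1..N}. y < k} \<and> m \<le> card {y\<in>{1..N}. k < y}}
      = (\<lambda>i. i + Suc m) ` {..n}"
  proof (intro equalityI subsetI)
    fix k assume "k \<in> {k. k \<in> {1..N} \<and> m \<le> card {y\<in>{1..N}. y < k} \<and> m \<le> card {y\<in>{1..N}. k < y}}"
    then have "k \<in> {1..N}" "m \<le> k - 1" "m \<le> N - k" using cards[of k] by auto
    then have "k - Suc m \<in> {..n}" "k = k - Suc m + Suc m" by (auto simp: N_def)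
    then show "k \<in> (\<lambda>i. i + Suc m) ` {..n}" by blast
  next
    fix k assume "k \<in> (\<lambda>i. i + Suc m) ` {..n}"
    then have "k \<le> N" "k \<in> {1..N}" "m \<le> k - 1" "m \<le> N - k" by (auto simp: N_def)
    then show "k \<in> {k. k \<in> {1..N} \<and> m \<le> card {y\<in>{1..N}. y < k} \<and> m \<le> card {y\<in>{1..N}. k < y}}"
      using cards[of k] by simp
  qed
  then have "of_nat (fact m) ^ 2 * leaf_poly m N = of_nat (fact (Suc (2*m))) * (\<Sum>i\<le>n. F (i + Suc m))"
    using leaf_gf_recursion[of "{1..N}" m, folded F_def] by (simp add: sum.reindex inj_on_def N_def leaf_poly_def)
  moreover have "F (i + Suc m) = of_nat (n choose i) * leaf_poly m (i + m) * leaf_poly m (n - i + m)"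
    if "i \<le> n" for i
  proof -
    have "i + Suc m \<le> N" "i + Suc m - 1 = i + m" "N - (i + Suc m) = n - i + m" "i + (n - i) = n"
      using that by (auto simp: N_def)
    then show ?thesis
      unfolding F_def sets[OF \<open>i + Suc m \<le> N\<close>] cards[OF \<open>i + Suc m \<le> N\<close>]
        leaf_gf_greaterThanAtMost leaf_poly_def[symmetric]
      by simp
  qed
  ultimately show ?thesis by (simp add: N_def)
qed

lemma sum_hw_eq_leaf_poly:
  assumes "m \<ge> 1" "N \<ge> 1"
  shows "(\<Sum>H\<in>phi m ` permutations_of_set {1..N}. of_nat (hw m N H) * monom 1 (ext_tree H)) = leaf_poly m N"
proof -
  have "(\<Sum>H\<in>phi m ` permutations_of_set {1..N}. of_nat (hw m N H) * monom 1 (ext_tree H) :: rat poly)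
      = (\<Sum>H\<in>phi m ` permutations_of_set {1..N}.
           \<Sum>ps | ps \<in> permutations_of_set {1..N} \<and> phi m ps = H. monom 1 (ext_tree (phi m ps)))"
    by (intro sum.cong refl) (simp add: hw_def of_nat_poly)
  also have "\<dots> = (\<Sum>ps\<in>permutations_of_set {1..N}. monom 1 (ext_tree (phi m ps)))"
    by (rule sum.image_gen[symmetric]) simp
  also have "\<dots> = (\<Sum>ps\<in>permutations_of_set {1..N}. monom 1 (length (fst (frame_run m empty_frame ps))))"
  proof (rule sum.cong[OF refl])
    fix ps assume "ps \<in> permutations_of_set {1..N}"
    then have "ps \<noteq> []" using assms(2) by (auto simp: permutations_of_set_def)
    then show "monom 1 (ext_tree (phi m ps)) = monom 1 (length (fst (frame_run m empty_frame ps)))"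
      using ext_tree_phi[OF assms(1)] by simp
  qed
  finally show ?thesis by (simp add: leaf_poly_def leaf_gf_def)
qed

section \<open>The exponential generating function\<close>

definition egf :: "(nat \<Rightarrow> 'a::field_char_0 poly) \<Rightarrow> 'a poly fps" where
  "egf a = Abs_fps (\<lambda>n. smult (1 / fact n) (a n))"

lemma egf_nth [simp]: "egf a $ n = smult (1 / fact n) (a n)"
  by (simp add: egf_def)

lemma smult_sum_right: "smult c (\<Sum>i\<in>I. f i) = (\<Sum>i\<in>I. smult c (f i))"
  by (induction I rule: infinite_finite_induct) (simp_all add: smult_add_right)

lemma fps_deriv_egf: "fps_deriv (egf a) = egf (\<lambda>n. a (Suc n))"
proof (rule fps_ext)
  fix n
  have "(of_nat (Suc n) :: 'a) * (1 / fact (Suc n)) = 1 / fact n"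
    by (simp add: fact_Suc del: of_nat_Suc)
  then show "fps_deriv (egf a) $ n = egf (\<lambda>n. a (Suc n)) $ n"
    by (simp add: of_nat_poly del: of_nat_Suc)
qed

lemma funpow_fps_deriv_egf: "(fps_deriv ^^ k) (egf a) = egf (\<lambda>n. a (n + k))"
  by (induction k) (simp_all add: fps_deriv_egf)

lemma egf_mult: "egf a * egf b = egf (\<lambda>n. \<Sum>i\<le>n. of_nat (n choose i) * (a i * b (n - i)))"
proof (rule fps_ext)
  fix n
  have "smult (1 / fact n) (of_nat (n choose i) * p) = smult (1 / (fact i * fact (n - i))) p"
    if "i \<le> n" for i and p :: "'a poly"
    using that by (simp add: of_nat_poly binomial_fact)
  then have "(\<Sum>i\<le>n. smult (1 / (fact i * fact (n - i))) (a i * b (n - i)))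
      = (\<Sum>i\<le>n. smult (1 / fact n) (of_nat (n choose i) * (a i * b (n - i))))"
    by (intro sum.cong) simp_all
  then show "(egf a * egf b) $ n = egf (\<lambda>n. \<Sum>i\<le>n. of_nat (n choose i) * (a i * b (n - i))) $ n"
    by (simp add: fps_mult_nth atLeast0AtMost smult_sum_right mult_smult_left mult_smult_right
        mult.commute mult.left_commute)
qed

lemma fps_const_mult_egf: "fps_const [:c:] * egf a = egf (\<lambda>n. smult c (a n))"
  by (rule fps_ext) (simp add: mult.commute)

lemma inverse_one_minus_X_power:
  "inverse ((1 - fps_X) ^ Suc k :: 'a::field fps) = Abs_fps (\<lambda>n. of_nat ((k + n) choose n))"
proof (induction k)
  case 0
  show ?case by (simp add: fps_inverse_one_minus_fps_X)
next
  case (Suc k)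
  have "inverse ((1 - fps_X) ^ Suc (Suc k) :: 'a fps) = inverse ((1 - fps_X) ^ Suc k) * inverse (1 - fps_X)"
    by (simp add: fps_inverse_mult mult.commute)
  also have "\<dots> = Abs_fps (\<lambda>n. of_nat ((k + n) choose n)) * Abs_fps (\<lambda>n. 1)"
    unfolding Suc.IH fps_inverse_one_minus_fps_X ..
  also have "\<dots> = Abs_fps (\<lambda>n. of_nat ((Suc k + n) choose n))"
    by (rule fps_ext) (simp add: fps_mult_nth atLeast0AtMost sum_choose_lower flip: of_nat_sum)
  finally show ?case .
qed

lemma Wgf_eq_egf:
  assumes "m \<ge> 1"
  shows "Wgf m = egf (\<lambda>n. leaf_poly m (n + m))"
proof -
  have "(\<Sum>H\<in>phi m ` permutations_of_set {1..n + m}. of_nat (hw m (n + m) H) * monom 1 (ext_tree H))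
      = leaf_poly m (n + m)" for n
    using sum_hw_eq_leaf_poly[OF assms, of "n + m"] assms by simp
  then show ?thesis by (simp add: Wgf_def egf_def)
qed

text \<open>The index \<open>n + (m + 1) + m\<close> is the shape produced by \<open>funpow_fps_deriv_egf\<close>.\<close>
lemma leaf_poly_ode_coeff:
  "leaf_poly m (n + (m + 1) + m) = smult (of_nat (fact (2*m + 1)) / of_nat (fact m) ^ 2)
     (\<Sum>i\<le>n. of_nat (n choose i) * (leaf_poly m (i + m) * leaf_poly m (n - i + m)))"
  (is "_ = smult _ ?\<Sigma>")
proof -
  define a :: rat where "a = of_nat (fact m) ^ 2"
  define b :: rat where "b = of_nat (fact (2*m + 1))"
  have "of_nat (fact m ^ 2) * leaf_poly m (n + Suc (2*m)) = of_nat (fact (Suc (2*m))) * ?\<Sigma>"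
    using leaf_poly_recursion[of m n] by (simp add: mult.assoc)
  then have eq: "smult a (leaf_poly m (n + Suc (2*m))) = smult b ?\<Sigma>"
    unfolding of_nat_mult_conv_smult a_def b_def by (simp only: of_nat_power Suc_eq_plus1)
  have idx: "n + (m + 1) + m = n + Suc (2*m)" by simp
  have "leaf_poly m (n + (m + 1) + m) = smult (1 / a) (smult a (leaf_poly m (n + Suc (2*m))))"
    unfolding idx by (simp add: a_def)
  also have "\<dots> = smult (b / a) ?\<Sigma>" unfolding eq by simp
  finally show ?thesis unfolding a_def b_def .
qed

theorem mainTheorem9:
  fixes m :: nat
  assumes "m \<ge> 1"
  shows "((fps_deriv ^^ (m+1)) (Wgf m)
           = fps_const [: of_nat (fact (2*m+1)) / (of_nat (fact m))^2 :] * (Wgf m)^2)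
      \<and> (\<forall>i \<le> m. ((fps_deriv ^^ i) (Wgf m)) $ 0 = smult (of_nat (fact (m+i))) [:0, 1:])
      \<and> (Abs_fps (\<lambda>n. poly (Wgf m $ n) 1)
           = fps_const (of_nat (fact m)) * inverse ((1 - fps_X) ^ (m+1)))"
proof (intro conjI allI impI)
  note W = Wgf_eq_egf[OF assms]
  show "(fps_deriv ^^ (m+1)) (Wgf m)
      = fps_const [: of_nat (fact (2*m+1)) / (of_nat (fact m))^2 :] * (Wgf m)^2"
    unfolding W funpow_fps_deriv_egf power2_eq_square[of "egf _"] egf_mult fps_const_mult_egf
    by (simp only: leaf_poly_ode_coeff)
  show "(fps_deriv ^^ i) (Wgf m) $ 0 = smult (of_nat (fact (m+i))) [:0, 1:]" if "i \<le> m" for i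
    using that by (simp add: W funpow_fps_deriv_egf leaf_poly_small add.commute)
  show "Abs_fps (\<lambda>n. poly (Wgf m $ n) 1) = fps_const (of_nat (fact m)) * inverse ((1 - fps_X) ^ (m+1))"
    by (rule fps_ext)
      (simp add: W poly_leaf_poly_1 inverse_one_minus_X_power[of m, simplified] binomial_fact add.commute)
qed

end
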